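(* Let $\mathcal{R}_1, \mathcal{R}_2$ be families of ranges and let $k,m$ be positive integers. Suppose that we have hitting $k$-cliques with respect to $\mathcal{R}_1$ and hitting $k$-cliques with respect to $\mathcal{R}_2$ (for these $k,m$). Then for $\mathcal{R} = \mathcal{R}_1 \cup \mathcal{R}_2$ it holds that $m_{\mathcal{R}}(k) \leq m$.
   Context: For a finite set $V \subset \mathbb{R}^2$ and a family $\mathcal{R}$ of subsets of $\mathbb{R}^2$ (ranges), $\mathcal{H}(V,\mathcal{R},m)$ is the hypergraph on $V$ whose hyperedges are the sets $V \cap R$, $R \in \mathcal{R}$, of size exactly $m$. A coloring $c\colon V \to [k]$ is polychromatic if every hyperedge contains a vertex of each of the $k$ colors. Point sets are in general position (pairwise distinct $x$-coordinates, $y$-coordinates, and values $x+y$). $m_{\mathcal{R}}(k)$ is the smallest $m$ such that for every finite $V \subset \mathbb{R}^2$ in general position, $\mathcal{H}(V,\mathcal{R},m)$ admits a polychromatic $k$-coloring ($\infty$ if none exists). For fixed $k,m,\mathcal{R}$ we say we have hitting $k$-cliques if for every finite $V \subset \mathbb{R}^2$ there exist pairwise disjoint $k$-element subsets of $V$ such that every hyperedge of $\mathcal{H}(V,\mathcal{R},m)$ fully contains at least one of these subsets. *)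

theory Defs
  imports Main "HOL-Library.Extended_Nat"
begin

type_synonym point = "real \<times> real"

definition general_position :: "point set \<Rightarrow> bool" where
  "general_position V \<longleftrightarrow>
     (\<forall>p\<in>V. \<forall>q\<in>V. p \<noteq> q \<longrightarrow>
        fst p \<noteq> fst q \<and> snd p \<noteq> snd q \<and> fst p + snd p \<noteq> fst q + snd q)"

definition hyperedges :: "point set \<Rightarrow> point set set \<Rightarrow> nat \<Rightarrow> point set set" where
  "hyperedges V \<R> m = {V \<inter> R | R. R \<in> \<R> \<and> card (V \<inter> R) = m}"

definition polychromatic :: "point set \<Rightarrow> point set set \<Rightarrow> nat \<Rightarrow> nat \<Rightarrow> (point \<Rightarrow> nat) \<Rightarrow> bool" where
  "polychromatic V \<R> m k c \<longleftrightarrow>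
     (\<forall>v\<in>V. c v \<in> {1..k}) \<and>
     (\<forall>E\<in>hyperedges V \<R> m. \<forall>i\<in>{1..k}. \<exists>v\<in>E. c v = i)"

definition admits_polychromatic :: "point set set \<Rightarrow> nat \<Rightarrow> nat \<Rightarrow> bool" where
  "admits_polychromatic \<R> k m \<longleftrightarrow>
     (\<forall>V. finite V \<and> general_position V \<longrightarrow> (\<exists>c. polychromatic V \<R> m k c))"

definition m_R :: "point set set \<Rightarrow> nat \<Rightarrow> enat" where
  "m_R \<R> k = (if \<exists>m. admits_polychromatic \<R> k m
               then enat (LEAST m. admits_polychromatic \<R> k m) else \<infinity>)"

definition hitting_cliques :: "point set set \<Rightarrow> nat \<Rightarrow> nat \<Rightarrow> bool" where
  "hitting_cliques \<R> k m \<longleftrightarrow>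
     (\<forall>V. finite V \<longrightarrow>
        (\<exists>\<S>. (\<forall>S\<in>\<S>. S \<subseteq> V \<and> card S = k) \<and>
              (\<forall>S\<in>\<S>. \<forall>T\<in>\<S>. S \<noteq> T \<longrightarrow> S \<inter> T = {}) \<and>
              (\<forall>E\<in>hyperedges V \<R> m. \<exists>S\<in>\<S>. S \<subseteq> E)))"

end

theory Submission
  imports Defs "HOL-Library.Disjoint_Sets" "HOL-Combinatorics.Transposition"
begin

(* Take the families \<A> and \<B> of disjoint k-cliques hitting the hyperedges of \<R>1 and of \<R>2.
   If every clique of \<A> \<union> \<B> receives all k colours, every hyperedge of \<R>1 \<union> \<R>2 does.
   Such a colouring is a proper k-edge-colouring of the bipartite multigraph whose vertices are
   the cliques and whose edges are the points, so it exists by Koenig's edge-colouring theorem.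
   We prove this directly: points are coloured one at a time, and when the colour \<alpha> missing in
   the new point's \<A>-clique is taken in its \<B>-clique, the colours \<alpha> and \<beta> are swapped along
   an alternating (Kempe) chain, where \<beta> is the colour missing in the \<B>-clique. *)

definition in_common_block :: "'a set set \<Rightarrow> 'a \<Rightarrow> 'a \<Rightarrow> bool" where
  "in_common_block \<S> x y \<longleftrightarrow> (\<exists>S\<in>\<S>. x \<in> S \<and> y \<in> S)"

definition clique_packing :: "'a set set \<Rightarrow> nat \<Rightarrow> bool" where
  "clique_packing \<S> k \<longleftrightarrow> disjoint \<S> \<and> (\<forall>S\<in>\<S>. finite S \<and> card S \<le> k)"

definition proper_coloring :: "('a \<Rightarrow> 'a \<Rightarrow> bool) \<Rightarrow> 'a set \<Rightarrow> nat \<Rightarrow> ('a \<Rightarrow> nat) \<Rightarrow> bool" where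
  "proper_coloring G W k c \<longleftrightarrow>
     (\<forall>x\<in>W. c x \<in> {1..k}) \<and> (\<forall>x\<in>W. \<forall>y\<in>W. G x y \<longrightarrow> c x \<noteq> c y)"

lemma in_common_block_commute: "in_common_block \<S> x y \<longleftrightarrow> in_common_block \<S> y x"
  unfolding in_common_block_def by blast

lemma in_common_block_sym: "in_common_block \<S> x y \<Longrightarrow> in_common_block \<S> y x"
  by (simp add: in_common_block_commute)

lemma in_common_block_trans:
  assumes "disjoint \<S>" "in_common_block \<S> x y" "in_common_block \<S> y z"
  shows "in_common_block \<S> x z"
proof -
  obtain S T where "S \<in> \<S>" "T \<in> \<S>" "x \<in> S" "y \<in> S" "y \<in> T" "z \<in> T"
    using assms(2,3) unfolding in_common_block_def by blast
  then have "S = T" using disjointD[OF assms(1)] by blast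
  with \<open>S \<in> \<S>\<close> \<open>x \<in> S\<close> \<open>z \<in> T\<close> show ?thesis unfolding in_common_block_def by blast
qed

lemma exists_color_not_on_block_mates:
  assumes "clique_packing \<S> k" "0 < k"
  obtains \<alpha> where "\<alpha> \<in> {1..k}" "\<And>x. x \<noteq> p \<Longrightarrow> in_common_block \<S> p x \<Longrightarrow> c x \<noteq> \<alpha>"
proof (cases "\<exists>S\<in>\<S>. p \<in> S")
  case False
  then show ?thesis using that[of 1] \<open>0 < k\<close> by (auto simp: in_common_block_def)
next
  case True
  then obtain S where S: "S \<in> \<S>" "p \<in> S" by blast
  with assms(1) have "disjoint \<S>" "finite S" "card S \<le> k" by (auto simp: clique_packing_def)
  have "0 < card S" using \<open>finite S\<close> S(2) by (auto simp: card_gt_0_iff)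
  have "card (c ` (S - {p})) \<le> card (S - {p})" by (rule card_image_le) (use \<open>finite S\<close> in simp)
  also have "\<dots> < card {1..k}" using S(2) \<open>0 < card S\<close> \<open>card S \<le> k\<close> by simp
  finally have "\<not> {1..k} \<subseteq> c ` (S - {p})"
    using card_mono[of "c ` (S - {p})" "{1..k}"] \<open>finite S\<close> by auto
  then obtain \<alpha> where \<alpha>: "\<alpha> \<in> {1..k}" "\<alpha> \<notin> c ` (S - {p})" by blast
  have "x \<in> S" if mate: "in_common_block \<S> p x" for x
  proof -
    obtain T where "T \<in> \<S>" "p \<in> T" "x \<in> T" using mate unfolding in_common_block_def by blast
    then have "T = S" using disjointD[OF \<open>disjoint \<S>\<close> _ S(1)] S(2) by blast
    with \<open>x \<in> T\<close> show ?thesis by simp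
  qed
  with \<alpha> show ?thesis using that by blast
qed

lemma proper_coloring_insert:
  assumes "proper_coloring G W k c" "\<alpha> \<in> {1..k}" "\<not> G p p"
    and "\<And>y. y \<in> W \<Longrightarrow> G p y \<or> G y p \<Longrightarrow> c y \<noteq> \<alpha>"
  shows "proper_coloring G (insert p W) k (c(p := \<alpha>))"
proof -
  have "(c(p := \<alpha>)) x \<noteq> (c(p := \<alpha>)) y" if "x \<in> insert p W" "y \<in> insert p W" "G x y" for x y
  proof (cases "x = p \<or> y = p")
    case True
    with that assms(3) have "x \<noteq> y" by auto
    with True that assms(4)[of x] assms(4)[of y] show ?thesis by auto
  next
    case False
    with that assms(1) show ?thesis unfolding proper_coloring_def by auto
  qed
  moreover have "(c(p := \<alpha>)) x \<in> {1..k}" if "x \<in> insert p W" for x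
    using that assms(1,2) unfolding proper_coloring_def by auto
  ultimately show ?thesis unfolding proper_coloring_def by blast
qed

lemma proper_coloring_transpose:
  assumes proper: "proper_coloring G W k c" and "\<alpha> \<in> {1..k}" "\<beta> \<in> {1..k}" "K \<subseteq> W"
    and closed: "\<And>x y. x \<in> K \<Longrightarrow> y \<in> W \<Longrightarrow> G x y \<or> G y x \<Longrightarrow> c y \<in> {\<alpha>, \<beta>} \<Longrightarrow> y \<in> K"
  shows "proper_coloring G W k (\<lambda>x. if x \<in> K then transpose \<alpha> \<beta> (c x) else c x)"
proof -
  let ?c' = "\<lambda>x. if x \<in> K then transpose \<alpha> \<beta> (c x) else c x"
  have across: "transpose \<alpha> \<beta> (c x) \<noteq> c y"
    if "x \<in> K" "y \<in> W" "y \<notin> K" "G x y \<or> G y x" "c x \<noteq> c y" for x y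
    using closed[of x y] that by (auto simp: transpose_eq_iff)
  have "?c' x \<noteq> ?c' y" if "x \<in> W" "y \<in> W" "G x y" for x y
  proof -
    have "c x \<noteq> c y" using proper that unfolding proper_coloring_def by blast
    then show ?thesis
      using across[of x y] across[of y x] that transpose_eq_imp_eq[of \<alpha> \<beta> "c x" "c y"]
      by (cases "x \<in> K"; cases "y \<in> K") auto
  qed
  moreover have "?c' x \<in> {1..k}" if "x \<in> W" for x
    using proper that \<open>\<alpha> \<in> {1..k}\<close> \<open>\<beta> \<in> {1..k}\<close>
    unfolding proper_coloring_def by (auto simp: transpose_def)
  ultimately show ?thesis unfolding proper_coloring_def by blast
qed

locale clique_packing_pair =
  fixes \<A> \<B> :: "'a set set" and k :: nat
  assumes packing_A: "clique_packing \<A> k" and packing_B: "clique_packing \<B> k" and k_pos: "0 < k"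
begin

lemma disjoint_packings: "disjoint \<A>" "disjoint \<B>"
  using packing_A packing_B by (simp_all add: clique_packing_def)

definition conflict :: "'a \<Rightarrow> 'a \<Rightarrow> bool" where
  "conflict x y \<longleftrightarrow> x \<noteq> y \<and> (in_common_block \<A> x y \<or> in_common_block \<B> x y)"

lemma conflict_sym: "conflict x y \<Longrightarrow> conflict y x"
  unfolding conflict_def in_common_block_def by blast

lemma same_color_block_mates_eq:
  assumes "proper_coloring conflict W k c" "\<S> \<in> {\<A>, \<B>}" "x \<in> W" "y \<in> W"
    and "in_common_block \<S> z x" "in_common_block \<S> z y" "c x = c y"
  shows "x = y"
proof -
  have "disjoint \<S>" using assms(2) disjoint_packings by blast
  have "in_common_block \<S> x y"
    by (rule in_common_block_trans[OF \<open>disjoint \<S>\<close> in_common_block_sym[OF assms(5)] assms(6)])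
  show ?thesis
  proof (rule ccontr)
    assume "x \<noteq> y"
    with \<open>in_common_block \<S> x y\<close> assms(2) have "conflict x y" by (auto simp: conflict_def)
    with assms(1,3,4,7) show False by (auto simp: proper_coloring_def)
  qed
qed

text \<open>A clique contains at most one point of each colour,
  so every point of the chain other than its start q is entered from the unique point that can
  precede it; hence the chain is closed under conflicts with \<alpha>- and \<beta>-coloured points.\<close>
definition kempe_step :: "'a set \<Rightarrow> ('a \<Rightarrow> nat) \<Rightarrow> nat \<Rightarrow> nat \<Rightarrow> 'a \<Rightarrow> 'a \<Rightarrow> bool" where
  "kempe_step W c \<alpha> \<beta> x y \<longleftrightarrow> x \<in> W \<and> y \<in> W \<and> x \<noteq> y \<and>
     (c x = \<alpha> \<and> c y = \<beta> \<and> in_common_block \<A> x y \<or> c x = \<beta> \<and> c y = \<alpha> \<and> in_common_block \<B> x y)"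

context
  fixes W c p q \<alpha> \<beta>
  assumes proper: "proper_coloring conflict W k c" and \<beta>_range: "\<beta> \<in> {1..k}"
    and \<alpha>_free: "\<And>y. y \<in> W \<Longrightarrow> in_common_block \<A> p y \<Longrightarrow> c y \<noteq> \<alpha>"
    and \<beta>_free: "\<And>y. y \<in> W \<Longrightarrow> in_common_block \<B> p y \<Longrightarrow> c y \<noteq> \<beta>"
    and q: "q \<in> W" "in_common_block \<B> p q" "c q = \<alpha>"
begin

private abbreviation chain :: "'a \<Rightarrow> bool" where
  "chain \<equiv> (kempe_step W c \<alpha> \<beta>)\<^sup>*\<^sup>* q"

lemma kempe_colors_differ: "\<alpha> \<noteq> \<beta>"
  using \<beta>_free q by blast

lemma kempe_chain_colors: "chain y \<Longrightarrow> y \<in> W \<and> c y \<in> {\<alpha>, \<beta>}"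
  by (induction rule: rtranclp_induct) (use q in \<open>auto simp: kempe_step_def\<close>)

lemma kempe_chain_predecessor:
  assumes "chain y" "y \<noteq> q"
  obtains z where "chain z" "kempe_step W c \<alpha> \<beta> z y"
  using assms by (cases rule: rtranclp.cases) auto

lemma kempe_chain_backward:
  assumes "chain x" "x \<noteq> q" "kempe_step W c \<alpha> \<beta> y x"
  shows "chain y"
proof -
  obtain z where z: "chain z" "kempe_step W c \<alpha> \<beta> z x"
    using kempe_chain_predecessor assms(1,2) by blast
  then have "z \<in> W" "y \<in> W" "c z = c y"
    and side: "in_common_block \<A> x z \<and> in_common_block \<A> x y \<or> in_common_block \<B> x z \<and> in_common_block \<B> x y"
    using assms(3) kempe_colors_differ unfolding kempe_step_def by (auto simp: in_common_block_commute)
  from side have "z = y"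
  proof
    assume "in_common_block \<A> x z \<and> in_common_block \<A> x y"
    then show ?thesis
      using same_color_block_mates_eq[OF proper, of \<A> z y x] \<open>z \<in> W\<close> \<open>y \<in> W\<close> \<open>c z = c y\<close> by simp
  next
    assume "in_common_block \<B> x z \<and> in_common_block \<B> x y"
    then show ?thesis
      using same_color_block_mates_eq[OF proper, of \<B> z y x] \<open>z \<in> W\<close> \<open>y \<in> W\<close> \<open>c z = c y\<close> by simp
  qed
  with z(1) show ?thesis by simp
qed

lemma kempe_chain_closed:
  assumes "chain x" "y \<in> W" "conflict x y" "c y \<in> {\<alpha>, \<beta>}"
  shows "chain y"
proof -
  have x: "x \<in> W" "c x \<in> {\<alpha>, \<beta>}" using kempe_chain_colors assms(1) by auto
  have "c x \<noteq> c y" using proper x assms(2,3) unfolding proper_coloring_def by blast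
  then have "kempe_step W c \<alpha> \<beta> x y \<or> kempe_step W c \<alpha> \<beta> y x"
    using x assms(2,3,4) unfolding kempe_step_def conflict_def by (auto simp: in_common_block_commute)
  then show ?thesis
  proof
    assume "kempe_step W c \<alpha> \<beta> x y"
    with assms(1) show ?thesis by (rule rtranclp.rtrancl_into_rtrancl)
  next
    assume entering: "kempe_step W c \<alpha> \<beta> y x"
    have "x \<noteq> q"
    proof
      assume "x = q"
      with entering q(3) kempe_colors_differ have "c y = \<beta>" "in_common_block \<B> q y"
        unfolding kempe_step_def by (auto simp: in_common_block_commute)
      moreover from this(2) have "in_common_block \<B> p y"
        by (rule in_common_block_trans[OF disjoint_packings(2) q(2)])
      ultimately show False using \<beta>_free assms(2) by blast
    qed
    with assms(1) entering show ?thesis using kempe_chain_backward by blast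
  qed
qed

lemma kempe_swap_proper:
  "proper_coloring conflict W k (\<lambda>x. if chain x then transpose \<alpha> \<beta> (c x) else c x)"
proof -
  have \<alpha>_range: "\<alpha> \<in> {1..k}" using proper q unfolding proper_coloring_def by blast
  have chain_sub: "Collect chain \<subseteq> W" using kempe_chain_colors by blast
  have closed: "y \<in> Collect chain"
    if "x \<in> Collect chain" "y \<in> W" "conflict x y \<or> conflict y x" "c y \<in> {\<alpha>, \<beta>}" for x y
  proof -
    have "conflict x y" using that(3) conflict_sym by metis
    with that show ?thesis using kempe_chain_closed by simp
  qed
  show ?thesis
    using proper_coloring_transpose[OF proper \<alpha>_range \<beta>_range chain_sub closed] by simp
qed

lemma kempe_swap_frees_color:
  assumes "y \<in> W" "conflict p y"
  shows "(if chain y then transpose \<alpha> \<beta> (c y) else c y) \<noteq> \<alpha>"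
proof (cases "chain y")
  case True
  have "c y \<noteq> \<beta>"
  proof
    assume "c y = \<beta>"
    then have "y \<noteq> q" using q(3) kempe_colors_differ by auto
    then obtain z where "chain z" "kempe_step W c \<alpha> \<beta> z y"
      using kempe_chain_predecessor True by blast
    then have z: "z \<in> W" "c z = \<alpha>" "in_common_block \<A> z y"
      using \<open>c y = \<beta>\<close> kempe_colors_differ unfolding kempe_step_def by auto
    have "\<not> in_common_block \<B> p y" using \<beta>_free assms(1) \<open>c y = \<beta>\<close> by blast
    then have "in_common_block \<A> p y" using assms(2) by (simp add: conflict_def)
    then have "in_common_block \<A> p z"
      by (rule in_common_block_trans[OF disjoint_packings(1) _ in_common_block_sym[OF z(3)]])
    then show False using \<alpha>_free z(1,2) by blast
  qed
  then have "c y = \<alpha>" using kempe_chain_colors True by blast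
  then show ?thesis using True kempe_colors_differ by simp
next
  case False
  have "c y \<noteq> \<alpha>"
  proof
    assume "c y = \<alpha>"
    then have "\<not> in_common_block \<A> p y" using \<alpha>_free assms(1) by blast
    then have "in_common_block \<B> p y" using assms(2) by (simp add: conflict_def)
    then have "y = q"
      using same_color_block_mates_eq[OF proper, of \<B> y q p] assms(1) q \<open>c y = \<alpha>\<close> by simp
    then show False using False by simp
  qed
  then show ?thesis using False by simp
qed

end

lemma proper_coloring_extend:
  assumes proper: "proper_coloring conflict W k c" and "p \<notin> W"
  obtains c' where "proper_coloring conflict (insert p W) k c'"
proof -
  obtain \<alpha> where \<alpha>: "\<alpha> \<in> {1..k}" "\<And>x. x \<noteq> p \<Longrightarrow> in_common_block \<A> p x \<Longrightarrow> c x \<noteq> \<alpha>"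
    using exists_color_not_on_block_mates[OF packing_A k_pos] by blast
  obtain \<beta> where \<beta>: "\<beta> \<in> {1..k}" "\<And>x. x \<noteq> p \<Longrightarrow> in_common_block \<B> p x \<Longrightarrow> c x \<noteq> \<beta>"
    using exists_color_not_on_block_mates[OF packing_B k_pos] by blast
  have \<alpha>_free: "\<And>y. y \<in> W \<Longrightarrow> in_common_block \<A> p y \<Longrightarrow> c y \<noteq> \<alpha>"
    using \<alpha>(2) \<open>p \<notin> W\<close> by metis
  have \<beta>_free: "\<And>y. y \<in> W \<Longrightarrow> in_common_block \<B> p y \<Longrightarrow> c y \<noteq> \<beta>"
    using \<beta>(2) \<open>p \<notin> W\<close> by metis
  have "\<exists>c'. proper_coloring conflict W k c' \<and> (\<forall>y\<in>W. conflict p y \<longrightarrow> c' y \<noteq> \<alpha>)"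
  proof (cases "\<exists>q\<in>W. in_common_block \<B> p q \<and> c q = \<alpha>")
    case True
    then obtain q where q: "q \<in> W" "in_common_block \<B> p q" "c q = \<alpha>" by blast
    show ?thesis
      using kempe_swap_proper[OF proper \<beta>(1) \<alpha>_free \<beta>_free q]
        kempe_swap_frees_color[OF proper \<beta>(1) \<alpha>_free \<beta>_free q] by blast
  next
    case False
    then have "\<forall>y\<in>W. conflict p y \<longrightarrow> c y \<noteq> \<alpha>" using \<alpha>_free by (auto simp: conflict_def)
    with proper show ?thesis by blast
  qed
  then obtain c' where c': "proper_coloring conflict W k c'" "\<And>y. y \<in> W \<Longrightarrow> conflict p y \<Longrightarrow> c' y \<noteq> \<alpha>"
    by blast
  have "\<not> conflict p p" by (simp add: conflict_def)
  moreover have "c' y \<noteq> \<alpha>" if "y \<in> W" "conflict p y \<or> conflict y p" for y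
    using c'(2)[OF that(1)] that(2) conflict_sym by metis
  ultimately show ?thesis using proper_coloring_insert[OF c'(1) \<alpha>(1)] that by metis
qed

lemma exists_proper_coloring: "finite W \<Longrightarrow> \<exists>c. proper_coloring conflict W k c"
proof (induction W rule: finite_induct)
  case empty
  show ?case by (simp add: proper_coloring_def)
next
  case (insert p W)
  then show ?case using proper_coloring_extend by metis
qed

lemma proper_coloring_clique_rainbow:
  assumes proper: "proper_coloring conflict W k c" and "S \<in> \<A> \<union> \<B>" "S \<subseteq> W" "card S = k"
  shows "c ` S = {1..k}"
proof (rule card_subset_eq)
  show "c ` S \<subseteq> {1..k}" using proper \<open>S \<subseteq> W\<close> unfolding proper_coloring_def by blast
  have "inj_on c S"
  proof (rule inj_onI, rule ccontr)
    fix x y assume "x \<in> S" "y \<in> S" "c x = c y" "x \<noteq> y"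
    then have "conflict x y" using \<open>S \<in> \<A> \<union> \<B>\<close> unfolding conflict_def in_common_block_def by blast
    with proper \<open>S \<subseteq> W\<close> \<open>x \<in> S\<close> \<open>y \<in> S\<close> \<open>c x = c y\<close> show False
      unfolding proper_coloring_def by blast
  qed
  then show "card (c ` S) = card {1..k}" using \<open>card S = k\<close> by (simp add: card_image)
qed simp

end

lemma exists_coloring_rainbow_on_cliques:
  assumes "clique_packing \<A> k" "clique_packing \<B> k" "0 < k" "finite V"
    and "\<forall>S\<in>\<A> \<union> \<B>. S \<subseteq> V \<and> card S = k"
  obtains c where "\<forall>v\<in>V. c v \<in> {1..k}" "\<forall>S\<in>\<A> \<union> \<B>. c ` S = {1..k}"
proof -
  interpret clique_packing_pair \<A> \<B> k
    using assms(1-3) by unfold_locales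
  obtain c where c: "proper_coloring conflict V k c"
    using exists_proper_coloring \<open>finite V\<close> by blast
  show ?thesis
  proof (rule that)
    show "\<forall>v\<in>V. c v \<in> {1..k}" using c unfolding proper_coloring_def by blast
    show "\<forall>S\<in>\<A> \<union> \<B>. c ` S = {1..k}"
    proof
      fix S assume S: "S \<in> \<A> \<union> \<B>"
      with assms(5) have "S \<subseteq> V" "card S = k" by auto
      with S show "c ` S = {1..k}" by (rule proper_coloring_clique_rainbow[OF c])
    qed
  qed
qed

lemma hyperedges_Un: "hyperedges V (\<R>1 \<union> \<R>2) m = hyperedges V \<R>1 m \<union> hyperedges V \<R>2 m"
  unfolding hyperedges_def by auto

lemma hitting_cliquesE:
  assumes "hitting_cliques \<R> k m" "finite V" "0 < k"
  obtains \<S> where "clique_packing \<S> k" "\<forall>S\<in>\<S>. S \<subseteq> V \<and> card S = k"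
    "\<forall>E\<in>hyperedges V \<R> m. \<exists>S\<in>\<S>. S \<subseteq> E"
proof -
  obtain \<S> where \<S>: "\<forall>S\<in>\<S>. S \<subseteq> V \<and> card S = k" "\<forall>S\<in>\<S>. \<forall>T\<in>\<S>. S \<noteq> T \<longrightarrow> S \<inter> T = {}"
    "\<forall>E\<in>hyperedges V \<R> m. \<exists>S\<in>\<S>. S \<subseteq> E"
    using assms(1,2) unfolding hitting_cliques_def by (elim allE impE exE conjE)
  have "disjoint \<S>" by (intro disjointI) (use \<S>(2) in blast)
  moreover have "finite S \<and> card S \<le> k" if "S \<in> \<S>" for S
  proof -
    have "card S = k" using \<S>(1) that by blast
    with \<open>0 < k\<close> show ?thesis using card_ge_0_finite by auto
  qed
  ultimately have "clique_packing \<S> k" unfolding clique_packing_def by blast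
  then show ?thesis using \<S>(1,3) by (rule that)
qed

lemma polychromatic_if_rainbow_subsets:
  assumes "\<forall>v\<in>V. c v \<in> {1..k}" "\<forall>E\<in>hyperedges V \<R> m. \<exists>S\<subseteq>E. c ` S = {1..k}"
  shows "polychromatic V \<R> m k c"
  unfolding polychromatic_def
proof (intro conjI ballI)
  fix E i assume E: "E \<in> hyperedges V \<R> m" and i: "i \<in> {1..k}"
  obtain S where "S \<subseteq> E" "c ` S = {1..k}" using bspec[OF assms(2) E] by blast
  with i show "\<exists>v\<in>E. c v = i" by (metis imageE subsetD)
qed (use assms(1) in simp)

lemma m_R_le:
  assumes "admits_polychromatic \<R> k m"
  shows "m_R \<R> k \<le> enat m"
proof -
  have "(LEAST m. admits_polychromatic \<R> k m) \<le> m" using assms by (rule Least_le)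
  moreover have "\<exists>m. admits_polychromatic \<R> k m" using assms by blast
  ultimately show ?thesis unfolding m_R_def by simp
qed

theorem theorem2:
  fixes \<R>1 \<R>2 :: "point set set" and k m :: nat
  assumes "k > 0" and "m > 0"
    and "hitting_cliques \<R>1 k m"
    and "hitting_cliques \<R>2 k m"
  shows "m_R (\<R>1 \<union> \<R>2) k \<le> enat m"
proof (rule m_R_le, unfold admits_polychromatic_def, intro allI impI)
  fix V :: "point set"
  assume "finite V \<and> general_position V"
  then have "finite V" by blast
  obtain \<A> where \<A>: "clique_packing \<A> k" "\<forall>S\<in>\<A>. S \<subseteq> V \<and> card S = k"
    "\<forall>E\<in>hyperedges V \<R>1 m. \<exists>S\<in>\<A>. S \<subseteq> E"
    using hitting_cliquesE[OF assms(3) \<open>finite V\<close> \<open>k > 0\<close>] .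
  obtain \<B> where \<B>: "clique_packing \<B> k" "\<forall>S\<in>\<B>. S \<subseteq> V \<and> card S = k"
    "\<forall>E\<in>hyperedges V \<R>2 m. \<exists>S\<in>\<B>. S \<subseteq> E"
    using hitting_cliquesE[OF assms(4) \<open>finite V\<close> \<open>k > 0\<close>] .
  have cliques: "\<forall>S\<in>\<A> \<union> \<B>. S \<subseteq> V \<and> card S = k" using \<A>(2) \<B>(2) by blast
  obtain c where c: "\<forall>v\<in>V. c v \<in> {1..k}" "\<forall>S\<in>\<A> \<union> \<B>. c ` S = {1..k}"
    using exists_coloring_rainbow_on_cliques[OF \<A>(1) \<B>(1) \<open>k > 0\<close> \<open>finite V\<close> cliques] .
  have rainbow: "\<forall>E\<in>hyperedges V (\<R>1 \<union> \<R>2) m. \<exists>S\<subseteq>E. c ` S = {1..k}"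
  proof
    fix E assume "E \<in> hyperedges V (\<R>1 \<union> \<R>2) m"
    then have "E \<in> hyperedges V \<R>1 m \<or> E \<in> hyperedges V \<R>2 m" by (simp add: hyperedges_Un)
    then obtain S where "S \<in> \<A> \<union> \<B>" "S \<subseteq> E" using \<A>(3) \<B>(3) by blast
    moreover from this(1) have "c ` S = {1..k}" by (rule bspec[OF c(2)])
    ultimately show "\<exists>S\<subseteq>E. c ` S = {1..k}" by blast
  qed
  show "\<exists>c. polychromatic V (\<R>1 \<union> \<R>2) m k c"
    using polychromatic_if_rainbow_subsets[OF c(1) rainbow] by blast
qed

end
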